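(* Let $\mathbf{T}\in\mathbb{R}^{n\ell\times n\ell}$ be symmetric positive definite and suppose $\mathbf{T}=\mathbf{I}_\ell\otimes\mathbf{T}_0+\sum_{k=1}^p\mathbf{E}_k\otimes\mathbf{T}_k$ with $\mathbf{T}_0\in\mathbb{R}^{n\times n}$ symmetric positive definite, $\mathbf{T}_k\in\mathbb{R}^{n\times n}$, and $\mathbf{E}_k\in\mathbb{R}^{\ell\times\ell}$ as in the context. Let $\mathbf{T}_0=\mathbf{L}\mathbf{L}^\top$ be its Cholesky factorization, set $\mathbf{A}_k=\mathbf{L}^{-1}\mathbf{T}_k\mathbf{L}^{-\top}$ and $\mathbf{A}=\sum_{k=1}^p\mathbf{E}_k\otimes\mathbf{A}_k$. Let $\mathcal{X}\in\mathbb{R}^{n\times p\times n}$ be the tensor with $\mathcal{X}_{i,k,j}=(\mathbf{A}_k)_{ij}$, let $\mathbf{U}\in\mathbb{R}^{n\times r}$ have orthonormal columns, and define $\mathcal{G}=\mathcal{X}\times_1\mathbf{U}^\top\times_3\mathbf{U}^\top$ and $\mathcal{T}=\mathcal{G}\times_1\mathbf{U}\times_3\mathbf{U}$. Then the matrix \[\widehat{\mathbf{T}}=(\mathbf{I}_\ell\otimes\mathbf{L})\big(\mathbf{I}+\mathcal{M}_{\mathcal{E}}[\mathcal{T}]\big)(\mathbf{I}_\ell\otimes\mathbf{L}^\top)\] is symmetric positive definite.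
   Context: The matrices $\mathbf{E}_1,\dots,\mathbf{E}_p\in\mathbb{R}^{\ell\times\ell}$ are position matrices: $\mathbf{E}_k$ has entries in $\{0,1/\sqrt{\eta_k}\}$ where $\eta_k\ge1$ is the number of its nonzero entries, and the supports of distinct $\mathbf{E}_k$ are disjoint. For a tensor $\mathcal{Y}\in\mathbb{R}^{n\times p\times n}$, $\mathrm{sq}(\mathcal{Y}_{:,k,:})$ is the $n\times n$ matrix with entries $\mathcal{Y}_{i,k,j}$ and $\mathcal{M}_{\mathcal{E}}[\mathcal{Y}]=\sum_{k=1}^p\mathbf{E}_k\otimes\mathrm{sq}(\mathcal{Y}_{:,k,:})$. The mode-$i$ product $\mathcal{Y}\times_i\mathbf{M}$ multiplies every mode-$i$ fiber of $\mathcal{Y}$ by $\mathbf{M}$, i.e. $(\mathcal{Y}\times_1\mathbf{M})_{a,k,j}=\sum_i\mathbf{M}_{ai}\mathcal{Y}_{i,k,j}$ and $(\mathcal{Y}\times_3\mathbf{M})_{i,k,b}=\sum_j\mathbf{M}_{bj}\mathcal{Y}_{i,k,j}$. The Kronecker product $\mathbf{B}\otimes\mathbf{C}$ has $(i,j)$ block $b_{ij}\mathbf{C}$; $\mathbf{L}^{-\top}=(\mathbf{L}^{-1})^\top$. *)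

theory Defs
  imports "HOL-Analysis.Analysis"
begin

text \<open>Matrices are HOL-Analysis matrices real^cols^rows. Index sets of size n, l, p, r
are arbitrary finite types 'n, 'l, 'p, 'r. The index of an (n l) x (n l) matrix is the
pair type 'l \<times> 'n, where (i,a) is row a of block-row i.\<close>

definition kron :: "real^'j^'i \<Rightarrow> real^'b^'a \<Rightarrow> real^('j \<times> 'b)^('i \<times> 'a)" where
  "kron B C = (\<chi> r c. B $ fst r $ fst c * C $ snd r $ snd c)"

definition sym_posdef :: "real^'m^'m \<Rightarrow> bool" where
  "sym_posdef M \<longleftrightarrow> transpose M = M \<and> (\<forall>x. x \<noteq> 0 \<longrightarrow> x \<bullet> (M *v x) > 0)"

definition lower_triangular :: "real^'n::{finite,linorder}^'n::{finite,linorder} \<Rightarrow> bool" where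
  "lower_triangular L \<longleftrightarrow> (\<forall>i j. i < j \<longrightarrow> L $ i $ j = 0)"

definition cholesky_factor :: "real^'n::{finite,linorder}^'n::{finite,linorder} \<Rightarrow> real^'n::{finite,linorder}^'n::{finite,linorder} \<Rightarrow> bool" where
  "cholesky_factor L T0 \<longleftrightarrow> lower_triangular L \<and> (\<forall>i. L $ i $ i > 0) \<and> T0 = L ** transpose L"

definition nnz :: "real^'l^'l \<Rightarrow> nat" where
  "nnz E = card {(i,j). E $ i $ j \<noteq> 0}"

definition position_matrix :: "real^'l^'l \<Rightarrow> bool" where
  "position_matrix E \<longleftrightarrow> nnz E \<ge> 1 \<and>
     (\<forall>i j. E $ i $ j = 0 \<or> E $ i $ j = 1 / sqrt (real (nnz E)))"

definition disjoint_supports :: "('p \<Rightarrow> real^'l^'l) \<Rightarrow> bool" where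
  "disjoint_supports E \<longleftrightarrow> (\<forall>k k' i j. k \<noteq> k' \<longrightarrow> E k $ i $ j = 0 \<or> E k' $ i $ j = 0)"

text \<open>Third-order tensors Y in R^{a x p x c} as functions Y i k j.\<close>
definition sq :: "('a \<Rightarrow> 'p \<Rightarrow> 'c \<Rightarrow> real) \<Rightarrow> 'p \<Rightarrow> real^'c^'a" where
  "sq Y k = (\<chi> i j. Y i k j)"

definition ME :: "('p::finite \<Rightarrow> real^'l^'l) \<Rightarrow> ('n::finite \<Rightarrow> 'p \<Rightarrow> 'n \<Rightarrow> real) \<Rightarrow> real^('l \<times> 'n)^('l \<times> 'n)" where
  "ME E Y = (\<Sum>k\<in>UNIV. kron (E k) (sq Y k))"

definition mode1 :: "('a \<Rightarrow> 'p \<Rightarrow> 'c \<Rightarrow> real) \<Rightarrow> real^'a^'m \<Rightarrow> ('m \<Rightarrow> 'p \<Rightarrow> 'c \<Rightarrow> real)" where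
  "mode1 Y M = (\<lambda>a k j. \<Sum>i\<in>UNIV. M $ a $ i * Y i k j)"

definition mode3 :: "('a \<Rightarrow> 'p \<Rightarrow> 'c \<Rightarrow> real) \<Rightarrow> real^'c^'m \<Rightarrow> ('a \<Rightarrow> 'p \<Rightarrow> 'm \<Rightarrow> real)" where
  "mode3 Y M = (\<lambda>i k b. \<Sum>j\<in>UNIV. M $ b $ j * Y i k j)"

end

theory Submission
  imports Defs
begin

text \<open>Congruence by \<open>I \<otimes> L\<^sup>-\<^sup>1\<close> turns \<open>T\<close> into \<open>I + A\<close>, which is therefore positive definite.
Slicewise, \<open>\<T>\<close> is \<open>A\<^sub>k\<close> compressed by the orthogonal projection \<open>P = U U\<^sup>T\<close>, so
\<open>\<M>\<^sub>\<E>[\<T>] = (I \<otimes> P) A (I \<otimes> P)\<close>. Splitting \<open>y = z + w\<close> with \<open>z = (I \<otimes> P) y\<close> gives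
\<open>y\<^sup>T (I + (I \<otimes> P) A (I \<otimes> P)) y = |w|\<^sup>2 + z\<^sup>T (I + A) z > 0\<close>, and congruence by the invertible
\<open>I \<otimes> L\<close> preserves positive definiteness.\<close>

lemma kron_mult: "kron A B ** kron C D = kron (A ** C) (B ** D)"
proof -
  have "(\<Sum>k\<in>UNIV. A $ fst r $ fst k * B $ snd r $ snd k * (C $ fst k $ fst c * D $ snd k $ snd c))
      = (\<Sum>i\<in>UNIV. A $ fst r $ i * C $ i $ fst c) * (\<Sum>a\<in>UNIV. B $ snd r $ a * D $ a $ snd c)" for r c
    by (simp add: sum_product sum.cartesian_product split_def mult_ac
        flip: UNIV_Times_UNIV del: UNIV_Times_UNIV)
  then show ?thesis
    by (simp add: kron_def matrix_matrix_mult_def vec_eq_iff)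
qed

lemma kron_transpose: "transpose (kron A B) = kron (transpose A) (transpose B)"
  by (simp add: kron_def transpose_def vec_eq_iff)

lemma kron_mat_one: "kron (mat 1) (mat 1) = mat 1"
  by (simp add: kron_def mat_def vec_eq_iff prod_eq_iff)

lemma matrix_add_rdistrib: "(B + C) ** A = B ** A + C ** A"
  by (vector matrix_matrix_mult_def sum.distrib[symmetric] field_simps)

lemma matrix_mul_sum_right: "A ** (\<Sum>k\<in>S. f k) = (\<Sum>k\<in>S. A ** f k)"
  by (induction S rule: infinite_finite_induct) (auto simp: matrix_add_ldistrib)

lemma matrix_mul_sum_left: "(\<Sum>k\<in>S. f k) ** A = (\<Sum>k\<in>S. f k ** A)"
  by (induction S rule: infinite_finite_induct) (auto simp: matrix_add_rdistrib)

lemma transpose_mat_one_plus: "transpose (mat 1 + A) = mat 1 + transpose A"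
  by (simp add: transpose_def vec_eq_iff mat_def)

lemma inner_matrix_vector_transpose: "(x::real^'n) \<bullet> (A *v y) = (transpose A *v x) \<bullet> y"
  by (metis dot_lmul_matrix transpose_matrix_vector)

lemma matrix_inv_left:
  assumes "invertible A"
  shows "matrix_inv A ** A = mat 1"
  using assms someI_ex[of "\<lambda>A'. A ** A' = mat 1 \<and> A' ** A = mat 1"]
  by (simp add: invertible_def matrix_inv_def)

lemma matrix_inv_right:
  assumes "invertible A"
  shows "A ** matrix_inv A = mat 1"
  using assms someI_ex[of "\<lambda>A'. A ** A' = mat 1 \<and> A' ** A = mat 1"]
  by (simp add: invertible_def matrix_inv_def)

lemma sq_mode1: "sq (mode1 Y M) k = M ** sq Y k"
  by (simp add: sq_def mode1_def matrix_matrix_mult_def)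

lemma sq_mode3: "sq (mode3 Y M) k = sq Y k ** transpose M"
  by (simp add: sq_def mode3_def matrix_matrix_mult_def transpose_def mult.commute)

lemma sq_slices: "sq (\<lambda>i k j. A k $ i $ j) = A"
  by (simp add: sq_def vec_eq_iff fun_eq_iff)

lemma ME_slicewise_mult:
  assumes "\<And>k. sq Y k = M ** sq Z k ** N"
  shows "ME E Y = kron (mat 1) M ** ME E Z ** kron (mat 1) N"
  by (simp add: ME_def assms kron_mult matrix_mul_sum_left matrix_mul_sum_right)

declare transpose_matrix_vector [simp del]

lemma sym_posdef_congruence:
  fixes S :: "real^'m^'m" and C :: "real^'m^'k"
  assumes "sym_posdef S" and "C ** R = mat 1"
  shows "sym_posdef (C ** S ** transpose C)"
  unfolding sym_posdef_def
proof (intro conjI allI impI)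
  show "transpose (C ** S ** transpose C) = C ** S ** transpose C"
    using assms(1) by (simp add: sym_posdef_def matrix_transpose_mul matrix_mul_assoc)
next
  fix x :: "real^'k"
  assume "x \<noteq> 0"
  define y where "y = transpose C *v x"
  have "transpose R *v y = transpose (C ** R) *v x"
    by (simp add: y_def matrix_vector_mul_assoc matrix_transpose_mul)
  then have "transpose R *v y = x"
    by (simp add: assms(2))
  with \<open>x \<noteq> 0\<close> have "y \<noteq> 0" by auto
  then have "y \<bullet> (S *v y) > 0"
    using assms(1) by (simp add: sym_posdef_def)
  moreover have "x \<bullet> ((C ** S ** transpose C) *v x) = y \<bullet> (S *v y)"
    by (simp add: y_def inner_matrix_vector_transpose[of x C] flip: matrix_vector_mul_assoc)
  ultimately show "x \<bullet> ((C ** S ** transpose C) *v x) > 0"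
    by simp
qed

lemma invertible_if_sym_posdef_gram:
  fixes L :: "real^'n^'n"
  assumes "sym_posdef (L ** transpose L)"
  shows "invertible L"
proof -
  have "x = 0" if "transpose L *v x = 0" for x
  proof -
    have "x \<bullet> ((L ** transpose L) *v x) = 0"
      by (simp add: inner_matrix_vector_transpose[of x L] that flip: matrix_vector_mul_assoc)
    then show "x = 0"
      using assms unfolding sym_posdef_def by force
  qed
  then have "invertible (transpose L)"
    using matrix_left_invertible_ker invertible_left_inverse by blast
  then show ?thesis
    using transpose_invertible by fastforce
qed

lemma kron_block_whitening:
  assumes "Li ** L = mat 1"
  shows "kron (mat 1) Li ** (kron (mat 1) (L ** transpose L) + (\<Sum>k\<in>K. kron (E k) (B k)))
           ** transpose (kron (mat 1) Li)
         = mat 1 + (\<Sum>k\<in>K. kron (E k) (Li ** B k ** transpose Li))"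
proof -
  have "Li ** (L ** transpose L) ** transpose Li = (Li ** L) ** transpose (Li ** L)"
    by (simp add: matrix_transpose_mul matrix_mul_assoc)
  then have "Li ** (L ** transpose L) ** transpose Li = mat 1"
    by (simp add: assms)
  then show ?thesis
    by (simp add: kron_transpose kron_mult kron_mat_one matrix_add_ldistrib matrix_add_rdistrib
        matrix_mul_sum_left matrix_mul_sum_right)
qed

lemma sym_posdef_one_plus_compression:
  fixes A P :: "real^'m^'m"
  assumes pd: "sym_posdef (mat 1 + A)" and P_sym: "transpose P = P" and P_idem: "P ** P = P"
  shows "sym_posdef (mat 1 + P ** A ** P)"
  unfolding sym_posdef_def
proof (intro conjI allI impI)
  have "transpose A = A"
    using pd by (simp add: sym_posdef_def transpose_mat_one_plus)
  then show "transpose (mat 1 + P ** A ** P) = mat 1 + P ** A ** P"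
    by (simp add: transpose_mat_one_plus matrix_transpose_mul P_sym matrix_mul_assoc)
next
  fix y :: "real^'m"
  assume "y \<noteq> 0"
  define z where "z = P *v y"
  define w where "w = y - z"
  have "z \<bullet> z = z \<bullet> y"
    by (simp add: z_def inner_matrix_vector_transpose[of "P *v y" P] P_sym P_idem
        matrix_vector_mul_assoc inner_commute)
  then have yy: "y \<bullet> y = z \<bullet> z + w \<bullet> w"
    by (simp add: w_def inner_diff_left inner_diff_right inner_commute)
  have "y \<bullet> ((mat 1 + P ** A ** P) *v y) = y \<bullet> y + z \<bullet> (A *v z)"
    by (simp add: matrix_vector_mult_add_rdistrib inner_add_right inner_matrix_vector_transpose[of y P]
        P_sym z_def flip: matrix_vector_mul_assoc)
  also have "\<dots> = w \<bullet> w + z \<bullet> ((mat 1 + A) *v z)"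
    by (simp add: yy matrix_vector_mult_add_rdistrib inner_add_right)
  finally have quad: "y \<bullet> ((mat 1 + P ** A ** P) *v y) = w \<bullet> w + z \<bullet> ((mat 1 + A) *v z)" .
  show "y \<bullet> ((mat 1 + P ** A ** P) *v y) > 0"
  proof (cases "z = 0")
    case True
    with quad \<open>y \<noteq> 0\<close> show ?thesis by (simp add: w_def)
  next
    case False
    with pd have "z \<bullet> ((mat 1 + A) *v z) > 0"
      by (simp add: sym_posdef_def)
    with quad show ?thesis
      by (metis add_nonneg_pos inner_ge_zero)
  qed
qed

theorem theorem5p2:
  fixes T :: "real^('l::finite \<times> 'n::{finite,linorder})^('l::finite \<times> 'n::{finite,linorder})"
    and T0 L :: "real^'n::{finite,linorder}^'n::{finite,linorder}"
    and Tk :: "'p::finite \<Rightarrow> real^'n::{finite,linorder}^'n::{finite,linorder}"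
    and E :: "'p \<Rightarrow> real^'l::finite^'l::finite"
    and U :: "real^'r::finite^'n::{finite,linorder}"
  assumes "sym_posdef T"
    and "T = kron (mat 1) T0 + (\<Sum>k\<in>UNIV. kron (E k) (Tk k))"
    and "sym_posdef T0"
    and "\<forall>k. position_matrix (E k)"
    and "disjoint_supports E"
    and "cholesky_factor L T0"
    and "transpose U ** U = mat 1"
  shows "let A = (\<lambda>k. matrix_inv L ** Tk k ** transpose (matrix_inv L));
             X = (\<lambda>i k j. A k $ i $ j);
             G = mode3 (mode1 X (transpose U)) (transpose U);
             TT = mode3 (mode1 G U) U
         in sym_posdef (kron (mat 1 :: real^'l::finite^'l::finite) L ** (mat 1 + ME E TT)
                         ** kron (mat 1 :: real^'l::finite^'l::finite) (transpose L))"
proof -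
  define A where "A = (\<lambda>k. matrix_inv L ** Tk k ** transpose (matrix_inv L))"
  define P where "P = U ** transpose U"
  define TT where
    "TT = mode3 (mode1 (mode3 (mode1 (\<lambda>i k j. A k $ i $ j) (transpose U)) (transpose U)) U) U"
  have T0: "T0 = L ** transpose L"
    using assms(6) by (simp add: cholesky_factor_def)
  then have "invertible L"
    using assms(3) invertible_if_sym_posdef_gram by blast
  then have "mat 1 + ME E (\<lambda>i k j. A k $ i $ j)
      = kron (mat 1) (matrix_inv L) ** T ** transpose (kron (mat 1) (matrix_inv L))"
    by (simp add: assms(2) T0 A_def ME_def sq_slices kron_block_whitening matrix_inv_left)
  also have "sym_posdef \<dots>"
    using \<open>invertible L\<close> assms(1)
    by (intro sym_posdef_congruence[where R = "kron (mat 1) L"])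
      (simp_all add: kron_mult kron_mat_one matrix_inv_left)
  finally have whitened: "sym_posdef (mat 1 + ME E (\<lambda>i k j. A k $ i $ j))" .
  have "ME E TT = kron (mat 1) P ** ME E (\<lambda>i k j. A k $ i $ j) ** kron (mat 1) P"
    by (rule ME_slicewise_mult) (simp add: TT_def P_def sq_mode1 sq_mode3 sq_slices matrix_mul_assoc)
  moreover have "transpose P = P" and "P ** P = P"
    using assms(7) by (simp_all add: P_def matrix_transpose_mul) (metis matrix_mul_assoc matrix_mul_rid)
  ultimately have "sym_posdef (mat 1 + ME E TT)"
    using whitened sym_posdef_one_plus_compression[of _ "kron (mat 1) P"]
    by (simp add: kron_transpose kron_mult)
  then have "sym_posdef (kron (mat 1) L ** (mat 1 + ME E TT) ** transpose (kron (mat 1) L))"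
    using \<open>invertible L\<close>
    by (intro sym_posdef_congruence[where R = "kron (mat 1) (matrix_inv L)"])
      (simp_all add: kron_mult kron_mat_one matrix_inv_right)
  then show ?thesis
    by (simp add: Let_def A_def TT_def kron_transpose)
qed

end
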